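(* Assume that for every $x\in V$ the functions $s\mapsto H(x,s)$ and $s\mapsto f_l(x,s)$ ($l=1,\dots,m$) are nondecreasing. If $(u^1,\dots,u^m)$ and $(v^1,\dots,v^m)$ both solve the discrete system (S), then for every $l=1,\dots,m$, $$\{x\in V: u^l(x)>v^l(x)\}\subset\{x\in V:\hat{u}^l(x)>\hat{v}^l(x)\}\subset\{x\in V: u^l(x)\ge v^l(x)\}.$$
   Context: Let $G=(V,E)$ be a finite, connected, undirected graph with at least two vertices. For $x,y\in V$, $d(x,y)$ denotes the graph (shortest-path) distance, and $\deg(x)=|\{y\in V:(x,y)\in E\}|$. The boundary of $G$ is $$\partial G=\Big\{x\in V:\ \exists\, y\in V \text{ with } \tfrac{1}{\deg(x)}\textstyle\sum_{(x,z)\in E} d(z,y)<d(x,y)\Big\},$$ and the interior is $G^o=V\setminus\partial G$. For $r:V\to\mathbb{R}$, the mean value at $x$ is $\overline{r}(x)=\frac{1}{\deg(x)}\sum_{(x,y)\in E} r(y)$. Fix an integer $m\ge1$. Let $H:V\times[0,\infty)\to\mathbb{R}$ and $f_l:V\times[0,\infty)\to\mathbb{R}$ ($l=1,\dots,m$) be continuous in the second variable with $H(x,0)=0$ and $f_l(x,0)=0$ for all $x\in V$; they are extended to negative arguments by $H(x,s)=-H(x,-s)$ and $f_l(x,s)=-f_l(x,-s)$ for $s<0$. Let $\phi^l:\partial G\to[0,\infty)$ ($l=1,\dots,m$) be boundary data satisfying $\phi^i(x)\phi^j(x)=0$ for all $x\in\partial G$ and $i\neq j$. The discrete system (S) for $(u^1,\dots,u^m)$,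 $u^l:V\to\mathbb{R}$, is: for every $l=1,\dots,m$, $$u^l(x)=\max\Big(H\Big(x,\ \overline{u}^l(x)-\sum_{p\neq l}\overline{u}^p(x)\Big)-f_l\big(x,u^l(x)\big),\ 0\Big)\quad (x\in G^o),\qquad u^l(x)=\phi^l(x)\quad (x\in\partial G).$$ For a vector $(u^1,\dots,u^m)$ we write $\hat{u}^l(x)=u^l(x)-\sum_{p\neq l}u^p(x)$, and similarly $\hat{v}^l$. *)

theory Defs
  imports "HOL-Analysis.Analysis"
begin

definition graph_ok :: "'a set \<Rightarrow> ('a \<times> 'a) set \<Rightarrow> bool" where
  "graph_ok V E \<longleftrightarrow> finite V \<and> card V \<ge> 2 \<and> E \<subseteq> V \<times> V \<and> sym E \<and> irrefl E
     \<and> (\<forall>x\<in>V. \<forall>y\<in>V. (x, y) \<in> E\<^sup>*)"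

definition walk :: "('a \<times> 'a) set \<Rightarrow> nat \<Rightarrow> 'a \<Rightarrow> 'a \<Rightarrow> bool" where
  "walk E n x y \<longleftrightarrow> (x, y) \<in> E ^^ n"

definition gdist :: "('a \<times> 'a) set \<Rightarrow> 'a \<Rightarrow> 'a \<Rightarrow> nat" where
  "gdist E x y = (LEAST n. walk E n x y)"

definition gdeg :: "'a set \<Rightarrow> ('a \<times> 'a) set \<Rightarrow> 'a \<Rightarrow> nat" where
  "gdeg V E x = card {y \<in> V. (x, y) \<in> E}"

definition mean_val :: "'a set \<Rightarrow> ('a \<times> 'a) set \<Rightarrow> ('a \<Rightarrow> real) \<Rightarrow> 'a \<Rightarrow> real" where
  "mean_val V E r x = (\<Sum>y\<in>{y \<in> V. (x, y) \<in> E}. r y) / real (gdeg V E x)"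

definition boundary :: "'a set \<Rightarrow> ('a \<times> 'a) set \<Rightarrow> 'a set" where
  "boundary V E = {x \<in> V. \<exists>y\<in>V.
      mean_val V E (\<lambda>z. real (gdist E z y)) x < real (gdist E x y)}"

definition interior_g :: "'a set \<Rightarrow> ('a \<times> 'a) set \<Rightarrow> 'a set" where
  "interior_g V E = V - boundary V E"

definition solves_S ::
  "'a set \<Rightarrow> ('a \<times> 'a) set \<Rightarrow> nat \<Rightarrow> ('a \<Rightarrow> real \<Rightarrow> real) \<Rightarrow> (nat \<Rightarrow> 'a \<Rightarrow> real \<Rightarrow> real)
   \<Rightarrow> (nat \<Rightarrow> 'a \<Rightarrow> real) \<Rightarrow> (nat \<Rightarrow> 'a \<Rightarrow> real) \<Rightarrow> bool" where
  "solves_S V E m H f \<phi> u \<longleftrightarrow>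
     (\<forall>l\<in>{1..m}.
        (\<forall>x\<in>interior_g V E.
           u l x = max (H x (mean_val V E (u l) x - (\<Sum>p\<in>{1..m}-{l}. mean_val V E (u p) x))
                        - f l x (u l x)) 0)
      \<and> (\<forall>x\<in>boundary V E. u l x = \<phi> l x))"

definition hat :: "nat \<Rightarrow> (nat \<Rightarrow> 'a \<Rightarrow> real) \<Rightarrow> nat \<Rightarrow> 'a \<Rightarrow> real" where
  "hat m u l x = u l x - (\<Sum>p\<in>{1..m}-{l}. u p x)"

end

theory Submission
  imports Defs
begin

text \<open>Every solution of (S) is nonnegative, and at each vertex at most one component is positive:
  on the boundary by the disjointness of the data, and in the interior because a positive component
  forces its own mean to exceed the sum of the other means, which cannot hold for two components
  simultaneously. Hence \<open>hat m u l \<le> u l\<close> everywhere, with equality where \<open>u l > 0\<close>, and both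
  inclusions follow by comparing the two solutions at a single vertex.\<close>

lemma nonneg_if_mono_on_nonneg:
  fixes g :: "real \<Rightarrow> real"
  assumes "mono_on {0..} g" "g 0 = 0" "s \<ge> 0"
  shows "g s \<ge> 0"
  using mono_onD[OF assms(1), of 0 s] assms(2,3) by simp

lemma nonpos_if_odd_mono_on_nonpos:
  fixes g :: "real \<Rightarrow> real"
  assumes mono: "mono_on {0..} g" and g0: "g 0 = 0" and odd: "\<And>s. s < 0 \<Longrightarrow> g s = - g (- s)"
    and "a \<le> 0"
  shows "g a \<le> 0"
proof (cases "a = 0")
  case False
  then have "a < 0" using \<open>a \<le> 0\<close> by simp
  then show ?thesis
    using odd nonneg_if_mono_on_nonneg[OF mono g0, of "- a"] by simp
qed (simp add: g0)

lemma mean_val_nonneg: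
  assumes "\<And>y. y \<in> V \<Longrightarrow> r y \<ge> 0"
  shows "mean_val V E r x \<ge> 0"
  unfolding mean_val_def using assms by (auto intro!: divide_nonneg_nonneg sum_nonneg)

lemma solves_S_interior:
  assumes "solves_S V E m H f \<phi> u" "l \<in> {1..m}" "x \<in> interior_g V E"
  shows "u l x = max (H x (mean_val V E (u l) x - (\<Sum>p\<in>{1..m}-{l}. mean_val V E (u p) x))
                        - f l x (u l x)) 0"
  using assms unfolding solves_S_def by blast

lemma solves_S_boundary:
  assumes "solves_S V E m H f \<phi> u" "l \<in> {1..m}" "x \<in> boundary V E"
  shows "u l x = \<phi> l x"
  using assms unfolding solves_S_def by blast

lemma solves_S_nonneg:
  assumes sol: "solves_S V E m H f \<phi> u"
    and phi_nn: "\<And>l x. l \<in> {1..m} \<Longrightarrow> x \<in> boundary V E \<Longrightarrow> \<phi> l x \<ge> 0"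
    and l: "l \<in> {1..m}" and x: "x \<in> V"
  shows "u l x \<ge> 0"
proof (cases "x \<in> boundary V E")
  case True
  then show ?thesis using solves_S_boundary[OF sol l] phi_nn[OF l] by simp
next
  case False
  then have "x \<in> interior_g V E" using x unfolding interior_g_def by simp
  from solves_S_interior[OF sol l this] show ?thesis by linarith
qed

lemma solves_S_pos_mean_dominates:
  assumes sol: "solves_S V E m H f \<phi> u"
    and j: "j \<in> {1..m}" and x: "x \<in> interior_g V E" and pos: "u j x > 0"
    and f_nn: "f j x (u j x) \<ge> 0"
    and H_nonpos: "\<And>a. a \<le> 0 \<Longrightarrow> H x a \<le> 0"
  shows "mean_val V E (u j) x > (\<Sum>p\<in>{1..m}-{j}. mean_val V E (u p) x)"
proof -
  let ?a = "mean_val V E (u j) x - (\<Sum>p\<in>{1..m}-{j}. mean_val V E (u p) x)"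
  have "u j x = H x ?a - f j x (u j x)"
    using solves_S_interior[OF sol j x] pos by (simp add: max_def split: if_splits)
  then have "H x ?a > 0" using pos f_nn by linarith
  then have "?a > 0" using H_nonpos by (meson not_le)
  then show ?thesis by simp
qed

lemma solves_S_disjoint_support:
  assumes sol: "solves_S V E m H f \<phi> u"
    and phi_nn: "\<And>l x. l \<in> {1..m} \<Longrightarrow> x \<in> boundary V E \<Longrightarrow> \<phi> l x \<ge> 0"
    and phi_disj: "\<And>i j x. i \<in> {1..m} \<Longrightarrow> j \<in> {1..m} \<Longrightarrow> i \<noteq> j \<Longrightarrow> x \<in> boundary V E
                     \<Longrightarrow> \<phi> i x * \<phi> j x = 0"
    and f_nn: "\<And>l x s. l \<in> {1..m} \<Longrightarrow> x \<in> V \<Longrightarrow> s \<ge> 0 \<Longrightarrow> f l x s \<ge> 0"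
    and H_nonpos: "\<And>x a. x \<in> V \<Longrightarrow> a \<le> 0 \<Longrightarrow> H x a \<le> 0"
    and l: "l \<in> {1..m}" and k: "k \<in> {1..m}" and lk: "l \<noteq> k" and x: "x \<in> V"
    and pos: "u l x > 0"
  shows "u k x = 0"
proof (rule ccontr)
  assume "u k x \<noteq> 0"
  with solves_S_nonneg[OF sol phi_nn k x] have kpos: "u k x > 0" by simp
  show False
  proof (cases "x \<in> boundary V E")
    case True
    then show False
      using phi_disj[OF l k lk True] solves_S_boundary[OF sol] l k pos kpos by simp
  next
    case False
    then have xi: "x \<in> interior_g V E" using x unfolding interior_g_def by simp
    define M where "M p = mean_val V E (u p) x" for p
    have M_nn: "M p \<ge> 0" if "p \<in> {1..m}" for p
      unfolding M_def using solves_S_nonneg[OF sol phi_nn that] by (rule mean_val_nonneg)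
    have dom: "M j > (\<Sum>p\<in>{1..m}-{j}. M p)" if "j \<in> {1..m}" "u j x > 0" for j
      unfolding M_def
      using solves_S_pos_mean_dominates[OF sol that(1) xi that(2)] f_nn H_nonpos that x by simp
    have "M k \<le> (\<Sum>p\<in>{1..m}-{l}. M p)" "M l \<le> (\<Sum>p\<in>{1..m}-{k}. M p)"
      by (rule member_le_sum; use k l lk M_nn in auto)+
    then show False using dom[OF l pos] dom[OF k kpos] by linarith
  qed
qed

lemma hat_le_self:
  assumes "\<And>p. p \<in> {1..m} \<Longrightarrow> u p x \<ge> 0"
  shows "hat m u l x \<le> u l x"
  unfolding hat_def using assms by (auto intro!: sum_nonneg)

lemma hat_eq_self:
  assumes "\<And>p. p \<in> {1..m} \<Longrightarrow> p \<noteq> l \<Longrightarrow> u p x = 0"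
  shows "hat m u l x = u l x"
  unfolding hat_def using assms by (simp add: sum.neutral)

theorem mainTheorem4:
  fixes V :: "'a set" and E :: "('a \<times> 'a) set" and m :: nat
    and H :: "'a \<Rightarrow> real \<Rightarrow> real" and f :: "nat \<Rightarrow> 'a \<Rightarrow> real \<Rightarrow> real"
    and \<phi> u v :: "nat \<Rightarrow> 'a \<Rightarrow> real"
  assumes G: "graph_ok V E"
    and m: "m \<ge> 1"
    and H_cont: "\<And>x. x \<in> V \<Longrightarrow> continuous_on {0..} (H x)"
    and f_cont: "\<And>l x. l \<in> {1..m} \<Longrightarrow> x \<in> V \<Longrightarrow> continuous_on {0..} (f l x)"
    and H0: "\<And>x. x \<in> V \<Longrightarrow> H x 0 = 0"
    and f0: "\<And>l x. l \<in> {1..m} \<Longrightarrow> x \<in> V \<Longrightarrow> f l x 0 = 0"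
    and H_odd: "\<And>x s. x \<in> V \<Longrightarrow> s < 0 \<Longrightarrow> H x s = - H x (- s)"
    and f_odd: "\<And>l x s. l \<in> {1..m} \<Longrightarrow> x \<in> V \<Longrightarrow> s < 0 \<Longrightarrow> f l x s = - f l x (- s)"
    and phi_nn: "\<And>l x. l \<in> {1..m} \<Longrightarrow> x \<in> boundary V E \<Longrightarrow> \<phi> l x \<ge> 0"
    and phi_disj: "\<And>i j x. i \<in> {1..m} \<Longrightarrow> j \<in> {1..m} \<Longrightarrow> i \<noteq> j \<Longrightarrow> x \<in> boundary V E
                     \<Longrightarrow> \<phi> i x * \<phi> j x = 0"
    and H_mono: "\<And>x. x \<in> V \<Longrightarrow> mono_on {0..} (H x)"
    and f_mono: "\<And>l x. l \<in> {1..m} \<Longrightarrow> x \<in> V \<Longrightarrow> mono_on {0..} (f l x)"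
    and u_sol: "solves_S V E m H f \<phi> u"
    and v_sol: "solves_S V E m H f \<phi> v"
    and l: "l \<in> {1..m}"
  shows "{x \<in> V. u l x > v l x} \<subseteq> {x \<in> V. hat m u l x > hat m v l x}
       \<and> {x \<in> V. hat m u l x > hat m v l x} \<subseteq> {x \<in> V. u l x \<ge> v l x}"
proof -
  have f_nn: "\<And>l x s. l \<in> {1..m} \<Longrightarrow> x \<in> V \<Longrightarrow> s \<ge> 0 \<Longrightarrow> f l x s \<ge> 0"
    using nonneg_if_mono_on_nonneg f_mono f0 by blast
  have H_nonpos: "\<And>x a. x \<in> V \<Longrightarrow> a \<le> 0 \<Longrightarrow> H x a \<le> 0"
    using nonpos_if_odd_mono_on_nonpos H_mono H0 H_odd by blast
  have hat_props: "hat m w l x \<le> w l x \<and> (w l x > 0 \<longrightarrow> hat m w l x = w l x)"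
    if sol: "solves_S V E m H f \<phi> w" and x: "x \<in> V" for w x
  proof
    show "hat m w l x \<le> w l x"
      by (rule hat_le_self) (rule solves_S_nonneg[OF sol phi_nn _ x])
    show "w l x > 0 \<longrightarrow> hat m w l x = w l x"
      using solves_S_disjoint_support[OF sol phi_nn phi_disj f_nn H_nonpos l _ _ x]
      by (auto intro: hat_eq_self)
  qed
  have "0 \<le> u l x" "0 \<le> v l x" if "x \<in> V" for x
    using solves_S_nonneg[OF u_sol phi_nn] solves_S_nonneg[OF v_sol phi_nn] l that by blast+
  then show ?thesis
    using hat_props[OF u_sol] hat_props[OF v_sol] by force
qed

end
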